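(* Consider a single target observed by a linear frequency modulated continuous wave radar with $N$ fast-time samples, $M$ slow-time samples (chirps) and $L$ uniformly spaced receive antennas ($N,M,L\ge 2$), whose baseband data are $$\mathcal{Y}_{n,m,l}=\gamma\, e^{\mathrm{j}(n-1)\omega_x}e^{\mathrm{j}(m-1)\omega_y}e^{\mathrm{j}(l-1)\omega_z}+\epsilon_{n,m,l},\quad n=1,\dots,N,\ m=1,\dots,M,\ l=1,\dots,L,$$ where the $\epsilon_{n,m,l}$ are i.i.d. $\mathcal{CN}(0,\sigma^2)$, $\gamma=g e^{\mathrm{j}\varphi}$ with $g=|\gamma|>0$, and the frequencies are related to the target's radial distance $r$, radial velocity $v$ and azimuth $\theta\in(-\pi/2,\pi/2)$ by $$\omega_x=2\pi\frac{r}{r_{\max}},\qquad \omega_y=\pi\frac{v}{v_{\max}},\qquad \omega_z=\pi\sin\theta,$$ with known constants $r_{\max},v_{\max}>0$. The target's Cartesian position is $p_x=r\sin\theta$, $p_y=r\cos\theta$. Treating $(\omega_x,\omega_y,\omega_z,\varphi,g,\sigma^2)$ as the unknown real parameters, the Cramér–Rao bound for estimating $[p_x,p_y]^{\mathrm T}$ is $$\mathrm{CRB}([p_x,p_y]^{\mathrm T})=\frac{6\sigma^2}{\pi^2NML|\gamma|^2}\begin{bmatrix}\frac{r_{\max}^2\sin^2\theta}{4(N^2-1)}+\frac{r^2}{L^2-1} & \left[\frac{r_{\max}^2}{4(N^2-1)}-\frac{r^2}{(L^2-1)\cos^2\theta}\right]\sin\theta\cos\theta\\ \left[\frac{r_{\max}^2}{4(N^2-1)}-\frac{r^2}{(L^2-1)\cos^2\theta}\right]\sin\theta\cos\theta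 & \frac{r_{\max}^2\cos^2\theta}{4(N^2-1)}+\frac{r^2\tan^2\theta}{L^2-1}\end{bmatrix}.$$
   Context: $\mathcal{CN}(0,\sigma^2)$ denotes the circularly symmetric complex Gaussian distribution with variance $\sigma^2$; $\mathrm{j}=\sqrt{-1}$. The Cramér–Rao bound of a function $\mathbf{h}$ of the parameters is $\frac{\partial\mathbf h}{\partial\boldsymbol\xi^{\mathrm T}}\mathbf F^{-1}(\boldsymbol\xi)\big[\frac{\partial\mathbf h}{\partial\boldsymbol\xi^{\mathrm T}}\big]^{\mathrm T}$, where $\mathbf F(\boldsymbol\xi)$ is the Fisher information matrix of the data with respect to the parameter vector $\boldsymbol\xi=(\omega_x,\omega_y,\omega_z,\varphi,g,\sigma^2)$. *)

theory Defs
  imports "HOL-Analysis.Analysis"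
begin

text \<open>Parameter vector xi = (omega_x, omega_y, omega_z, varphi, g, sigma^2) :: real^6,
  components xi$1 .. xi$6 (index 6 of the numeral type 6).\<close>

definition obs_idx :: "nat \<Rightarrow> nat \<Rightarrow> nat \<Rightarrow> (nat \<times> nat \<times> nat) set" where
  "obs_idx N M L = {1..N} \<times> {1..M} \<times> {1..L}"

definition sig_mean :: "real^6 \<Rightarrow> nat \<times> nat \<times> nat \<Rightarrow> complex" where
  "sig_mean xi = (\<lambda>(n, m, l).
      (complex_of_real (xi$5) * exp (\<i> * complex_of_real (xi$4)))
      * exp (\<i> * complex_of_real (real (n - 1) * xi$1))
      * exp (\<i> * complex_of_real (real (m - 1) * xi$2))
      * exp (\<i> * complex_of_real (real (l - 1) * xi$3)))"

definition cn_pdf :: "real \<Rightarrow> complex \<Rightarrow> real" where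
  "cn_pdf s2 z = exp (- (cmod z)\<^sup>2 / s2) / (pi * s2)"

definition data_space :: "nat \<Rightarrow> nat \<Rightarrow> nat \<Rightarrow> ((nat \<times> nat \<times> nat) \<Rightarrow> complex) measure" where
  "data_space N M L = PiM (obs_idx N M L) (\<lambda>_. (lborel :: complex measure))"

definition data_pdf :: "nat \<Rightarrow> nat \<Rightarrow> nat \<Rightarrow> real^6 \<Rightarrow> ((nat \<times> nat \<times> nat) \<Rightarrow> complex) \<Rightarrow> real" where
  "data_pdf N M L xi y = (\<Prod>k\<in>obs_idx N M L. cn_pdf (xi$6) (y k - sig_mean xi k))"

definition score :: "nat \<Rightarrow> nat \<Rightarrow> nat \<Rightarrow> real^6 \<Rightarrow> 6 \<Rightarrow> ((nat \<times> nat \<times> nat) \<Rightarrow> complex) \<Rightarrow> real" where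
  "score N M L xi i y = deriv (\<lambda>t. ln (data_pdf N M L (xi + t *\<^sub>R axis i 1) y)) 0"

definition fisher_info :: "nat \<Rightarrow> nat \<Rightarrow> nat \<Rightarrow> real^6 \<Rightarrow> real^6^6" where
  "fisher_info N M L xi = (\<chi> i k. integral\<^sup>L (data_space N M L)
      (\<lambda>y. score N M L xi i y * score N M L xi k y * data_pdf N M L xi y))"

definition pos_map :: "real \<Rightarrow> real^6 \<Rightarrow> real^2" where
  "pos_map rmax xi = (let r = xi$1 * rmax / (2 * pi); th = arcsin (xi$3 / pi)
                      in vector [r * sin th, r * cos th])"

definition pos_jacobian :: "real \<Rightarrow> real^6 \<Rightarrow> real^6^2" where
  "pos_jacobian rmax xi = (\<chi> i k. deriv (\<lambda>t. pos_map rmax (xi + t *\<^sub>R axis k 1) $ i) 0)"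

definition crb_pos :: "nat \<Rightarrow> nat \<Rightarrow> nat \<Rightarrow> real \<Rightarrow> real^6 \<Rightarrow> real^2^2" where
  "crb_pos N M L rmax xi =
     pos_jacobian rmax xi ** matrix_inv (fisher_info N M L xi) ** transpose (pos_jacobian rmax xi)"

end

theory Submission
  imports Defs "HOL-Probability.Distributions"
begin

(* The density of CN(0, s) is the product of two real normal densities of variance s/2 in the
   real and imaginary parts, so Gaussian moments of polynomials in the residual are explicit.
   Differentiating the log-likelihood along a parameter direction gives, for every sample, a
   quadratic polynomial of mean zero in its residual; by independence the Fisher information is
   the sum of the per-sample second moments, which is the Slepian-Bangs formula
     F_ij = 2/sigma^2 * sum_k Re (conj (d_i mu_k) * d_j mu_k) + NML * d_i sigma^2 * d_j sigma^2 / sigma^4.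
   As the phases are linear in the frequencies, F is block diagonal with a 4x4 block
   c [V + m m^T, m; m^T, 1], where m and V are the means (N-1)/2 and the variances (N^2-1)/12 of
   the grid indices, and its inverse is explicit. *)

lemma (in product_sigma_finite) has_bochner_integral_product_prod:
  fixes f :: "'i \<Rightarrow> 'a \<Rightarrow> real"
  assumes "finite I" and "\<And>i. i \<in> I \<Longrightarrow> has_bochner_integral (M i) (f i) (c i)"
  shows "has_bochner_integral (Pi\<^sub>M I M) (\<lambda>x. \<Prod>i\<in>I. f i (x i)) (\<Prod>i\<in>I. c i)"
  using assms product_integrable_prod[of I f] product_integral_prod[of I f]
  by (simp add: has_bochner_integral_iff)

interpretation lborel_real_product: product_sigma_finite "\<lambda>_::'i. (lborel::real measure)"
  by unfold_locales

interpretation lborel_complex_product: product_sigma_finite "\<lambda>_::'i. (lborel::complex measure)"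
  by unfold_locales

lemma (in product_sigma_finite) has_bochner_integral_product_cross_term:
  fixes a b p :: "'i \<Rightarrow> 'a \<Rightarrow> real"
  assumes fin: "finite I" and k: "k \<in> I" "k' \<in> I"
    and p: "\<And>k. k \<in> I \<Longrightarrow> has_bochner_integral (M k) (p k) 1"
    and a: "\<And>k. k \<in> I \<Longrightarrow> has_bochner_integral (M k) (\<lambda>x. a k x * p k x) 0"
    and b: "\<And>k. k \<in> I \<Longrightarrow> has_bochner_integral (M k) (\<lambda>x. b k x * p k x) 0"
    and ab: "\<And>k. k \<in> I \<Longrightarrow> has_bochner_integral (M k) (\<lambda>x. a k x * b k x * p k x) (V k)"
  shows "has_bochner_integral (Pi\<^sub>M I M) (\<lambda>y. a k (y k) * b k' (y k') * (\<Prod>j\<in>I. p j (y j)))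
    (if k = k' then V k else 0)"
proof -
  define f where "f = (\<lambda>j x. (if j = k then a k x else 1) * (if j = k' then b k' x else 1) * p j x)"
  define c where "c = (\<lambda>j. if j = k \<and> j = k' then V k else if j = k \<or> j = k' then 0 else 1)"
  have "has_bochner_integral (M j) (f j) (c j)" if "j \<in> I" for j
    using that a b ab p by (auto simp: f_def c_def)
  then have "has_bochner_integral (Pi\<^sub>M I M) (\<lambda>y. \<Prod>j\<in>I. f j (y j)) (\<Prod>j\<in>I. c j)"
    by (rule has_bochner_integral_product_prod[OF fin])
  moreover have "(\<Prod>j\<in>I. f j (y j)) = a k (y k) * b k' (y k') * (\<Prod>j\<in>I. p j (y j))" for y
    using k fin by (simp add: f_def prod.distrib prod.delta)
  moreover have "(\<Prod>j\<in>I. c j) = (if k = k' then V k else 0)"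
  proof (cases "k = k'")
    case True
    then have "c = (\<lambda>j. if j = k then V k else 1)"
      by (auto simp: c_def)
    with True k fin show ?thesis
      by (simp add: prod.delta)
  next
    case False
    with k fin show ?thesis
      by (auto simp: c_def intro!: prod_zero)
  qed
  ultimately show ?thesis
    by simp
qed

lemma (in product_sigma_finite) has_bochner_integral_product_sum_mult_sum:
  fixes a b p :: "'i \<Rightarrow> 'a \<Rightarrow> real"
  assumes fin: "finite I"
    and p: "\<And>k. k \<in> I \<Longrightarrow> has_bochner_integral (M k) (p k) 1"
    and a: "\<And>k. k \<in> I \<Longrightarrow> has_bochner_integral (M k) (\<lambda>x. a k x * p k x) 0"
    and b: "\<And>k. k \<in> I \<Longrightarrow> has_bochner_integral (M k) (\<lambda>x. b k x * p k x) 0"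
    and ab: "\<And>k. k \<in> I \<Longrightarrow> has_bochner_integral (M k) (\<lambda>x. a k x * b k x * p k x) (V k)"
  shows "has_bochner_integral (Pi\<^sub>M I M)
    (\<lambda>y. (\<Sum>k\<in>I. a k (y k)) * (\<Sum>k\<in>I. b k (y k)) * (\<Prod>k\<in>I. p k (y k))) (\<Sum>k\<in>I. V k)"
proof -
  have "(\<Sum>k\<in>I. a k (y k)) * (\<Sum>k\<in>I. b k (y k)) * (\<Prod>k\<in>I. p k (y k)) =
      (\<Sum>k\<in>I. \<Sum>k'\<in>I. a k (y k) * b k' (y k') * (\<Prod>j\<in>I. p j (y j)))" for y
    by (subst sum_product) (simp only: sum_distrib_right)
  moreover have "has_bochner_integral (Pi\<^sub>M I M)
      (\<lambda>y. \<Sum>k\<in>I. \<Sum>k'\<in>I. a k (y k) * b k' (y k') * (\<Prod>j\<in>I. p j (y j)))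
      (\<Sum>k\<in>I. \<Sum>k'\<in>I. if k = k' then V k else 0)"
    using has_bochner_integral_product_cross_term[OF fin _ _ p a b ab]
    by (intro has_bochner_integral_sum)
  ultimately show ?thesis
    using fin by simp
qed

lemma has_bochner_integral_complex_Re_Im_mult:
  fixes f g :: "real \<Rightarrow> real"
  assumes f: "has_bochner_integral lborel f a" and g: "has_bochner_integral lborel g b"
  shows "has_bochner_integral lborel (\<lambda>z::complex. f (Re z) * g (Im z)) (a * b)"
proof -
  have [measurable]: "f \<in> borel_measurable borel" "g \<in> borel_measurable borel"
    using f g by (auto simp: has_bochner_integral_iff)
  define h where "h = (\<lambda>e::complex. if e = 1 then f else g)"
  define c where "c = (\<lambda>e::complex. if e = 1 then a else b)"
  have "has_bochner_integral (\<Pi>\<^sub>M e\<in>Basis. lborel) (\<lambda>x. \<Prod>e\<in>Basis. h e (x e)) (\<Prod>e\<in>Basis. c e)"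
    using f g by (intro lborel_real_product.has_bochner_integral_product_prod) (auto simp: h_def c_def)
  moreover have "(\<Prod>e\<in>Basis. h e (x e)) = f (Re (\<Sum>e\<in>Basis. x e *\<^sub>R e)) * g (Im (\<Sum>e\<in>Basis. x e *\<^sub>R e))"
    for x :: "complex \<Rightarrow> real"
    by (simp add: h_def Basis_complex_def)
  ultimately have "has_bochner_integral (distr (\<Pi>\<^sub>M e\<in>Basis. lborel) borel (\<lambda>x. \<Sum>e\<in>Basis. x e *\<^sub>R e))
      (\<lambda>z::complex. f (Re z) * g (Im z)) (a * b)"
    by (intro has_bochner_integral_distr) (simp_all add: c_def Basis_complex_def)
  then show ?thesis
    by (simp only: lborel_eq[symmetric])
qed

definition normal_moment :: "real \<Rightarrow> nat \<Rightarrow> real" where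
  "normal_moment \<sigma> k = (if even k then fact k / ((2 / \<sigma>\<^sup>2) ^ (k div 2) * fact (k div 2)) else 0)"

lemma has_bochner_integral_normal_moment:
  assumes "\<sigma> > 0"
  shows "has_bochner_integral lborel (\<lambda>x. normal_density \<mu> \<sigma> x * (x - \<mu>) ^ k) (normal_moment \<sigma> k)"
proof (cases "even k")
  case True
  then obtain j where "k = 2 * j" by (auto elim: evenE)
  then show ?thesis
    using normal_moment_even[OF assms, of \<mu> j] by (simp add: normal_moment_def)
next
  case False
  then obtain j where "k = 2 * j + 1" by (auto elim: oddE)
  then show ?thesis
    using normal_moment_odd[OF assms, of \<mu> j] by (simp add: normal_moment_def)
qed

lemma cn_pdf_eq_normal_density:
  assumes "s > 0"
  shows "cn_pdf s (z - \<mu>) =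
    normal_density (Re \<mu>) (sqrt (s / 2)) (Re z) * normal_density (Im \<mu>) (sqrt (s / 2)) (Im z)"
proof -
  have "(cmod (z - \<mu>))\<^sup>2 = (Re z - Re \<mu>)\<^sup>2 + (Im z - Im \<mu>)\<^sup>2"
    by (simp add: cmod_def)
  moreover have "sqrt (2 * pi * (s / 2)) * sqrt (2 * pi * (s / 2)) = pi * s"
    using assms by simp
  ultimately show ?thesis
    using assms unfolding cn_pdf_def normal_density_def
    by (simp add: exp_add[symmetric] field_simps add_divide_distrib)
qed

lemma has_bochner_integral_cn_pdf_monomial:
  assumes "s > 0"
  shows "has_bochner_integral lborel (\<lambda>z. (Re z - Re \<mu>) ^ i * (Im z - Im \<mu>) ^ j * cn_pdf s (z - \<mu>))
    (normal_moment (sqrt (s / 2)) i * normal_moment (sqrt (s / 2)) j)"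
proof -
  have "has_bochner_integral lborel
      (\<lambda>z. normal_density (Re \<mu>) (sqrt (s / 2)) (Re z) * (Re z - Re \<mu>) ^ i *
           (normal_density (Im \<mu>) (sqrt (s / 2)) (Im z) * (Im z - Im \<mu>) ^ j))
      (normal_moment (sqrt (s / 2)) i * normal_moment (sqrt (s / 2)) j)"
    using assms by (intro has_bochner_integral_complex_Re_Im_mult has_bochner_integral_normal_moment) auto
  then show ?thesis
    using assms by (simp add: cn_pdf_eq_normal_density mult_ac)
qed

(* Bivariate polynomials as lists of monomials (c, i, j), read as c x^i y^j: simp expands their
   products, which makes Gaussian moments of products of quadratics a mechanical computation. *)
type_synonym poly2 = "(real \<times> nat \<times> nat) list"

definition poly2_eval :: "poly2 \<Rightarrow> real \<Rightarrow> real \<Rightarrow> real" where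
  "poly2_eval p x y = (\<Sum>(c, i, j)\<leftarrow>p. c * x ^ i * y ^ j)"

definition poly2_mult :: "poly2 \<Rightarrow> poly2 \<Rightarrow> poly2" where
  "poly2_mult p q = concat (map (\<lambda>(c, i, j). map (\<lambda>(d, k, l). (c * d, i + k, j + l)) q) p)"

definition poly2_cn_mean :: "real \<Rightarrow> poly2 \<Rightarrow> real" where
  "poly2_cn_mean s p = (\<Sum>(c, i, j)\<leftarrow>p. c * (normal_moment (sqrt (s / 2)) i * normal_moment (sqrt (s / 2)) j))"

lemma poly2_eval_mult: "poly2_eval (poly2_mult p q) x y = poly2_eval p x y * poly2_eval q x y"
proof (induction p)
  case (Cons m p)
  have "c * x ^ i * y ^ j * poly2_eval q x y =
      poly2_eval (map (\<lambda>(d, k, l). (c * d, i + k, j + l)) q) x y" for c i j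
    by (induction q) (auto simp: poly2_eval_def power_add algebra_simps)
  with Cons show ?case
    by (cases m) (simp add: poly2_mult_def poly2_eval_def distrib_right)
qed (simp add: poly2_mult_def poly2_eval_def)

lemma has_bochner_integral_poly2_cn_pdf:
  assumes "s > 0"
  shows "has_bochner_integral lborel
    (\<lambda>z. poly2_eval p (Re z - Re \<mu>) (Im z - Im \<mu>) * cn_pdf s (z - \<mu>)) (poly2_cn_mean s p)"
proof (induction p)
  case Nil
  show ?case by (simp add: poly2_eval_def poly2_cn_mean_def has_bochner_integral_zero)
next
  case (Cons m p)
  obtain c i j where m: "m = (c, i, j)" by (cases m)
  from has_bochner_integral_add[OF
      has_bochner_integral_mult_right[OF has_bochner_integral_cn_pdf_monomial[OF assms]] Cons]
  show ?case
    by (simp add: m poly2_eval_def poly2_cn_mean_def algebra_simps)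
qed

definition quad_form :: "real \<Rightarrow> complex \<Rightarrow> real \<Rightarrow> complex \<Rightarrow> real" where
  "quad_form a0 a g w = a0 + Re (cnj a * w) + g * (cmod w)\<^sup>2"

definition quad_poly2 :: "real \<Rightarrow> complex \<Rightarrow> real \<Rightarrow> poly2" where
  "quad_poly2 a0 a g = [(a0, 0, 0), (Re a, 1, 0), (Im a, 0, 1), (g, 2, 0), (g, 0, 2)]"

lemma quad_form_eq_poly2_eval: "quad_form a0 a g w = poly2_eval (quad_poly2 a0 a g) (Re w) (Im w)"
  by (simp add: quad_form_def quad_poly2_def poly2_eval_def cmod_power2 algebra_simps)

lemma has_bochner_integral_quad_form_cn_pdf:
  assumes "s > 0"
  shows "has_bochner_integral lborel (\<lambda>z. quad_form a0 a g (z - \<mu>) * cn_pdf s (z - \<mu>)) (a0 + g * s)"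
proof -
  have "poly2_cn_mean s (quad_poly2 a0 a g) = a0 + g * s"
    using assms by (simp add: quad_poly2_def poly2_cn_mean_def normal_moment_def)
  with has_bochner_integral_poly2_cn_pdf[OF assms, of "quad_poly2 a0 a g" \<mu>] show ?thesis
    by (simp add: quad_form_eq_poly2_eval)
qed

lemma has_bochner_integral_quad_form_mult_cn_pdf:
  assumes "s > 0"
  shows "has_bochner_integral lborel
    (\<lambda>z. quad_form a0 a g (z - \<mu>) * quad_form b0 b h (z - \<mu>) * cn_pdf s (z - \<mu>))
    (a0 * b0 + (a0 * h + g * b0) * s + s / 2 * Re (cnj a * b) + 2 * g * h * s\<^sup>2)"
proof -
  let ?pq = "poly2_mult (quad_poly2 a0 a g) (quad_poly2 b0 b h)"
  have "poly2_cn_mean s ?pq = a0 * b0 + (a0 * h + g * b0) * s + s / 2 * Re (cnj a * b) + 2 * g * h * s\<^sup>2"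
    using assms
    by (simp add: quad_poly2_def poly2_cn_mean_def poly2_mult_def normal_moment_def fact_numeral
        field_simps power2_eq_square)
  with has_bochner_integral_poly2_cn_pdf[OF assms, of ?pq \<mu>] show ?thesis
    by (simp add: quad_form_eq_poly2_eval poly2_eval_mult)
qed

definition phase :: "real^6 \<Rightarrow> nat \<times> nat \<times> nat \<Rightarrow> real" where
  "phase \<xi> = (\<lambda>(n, m, l). \<xi>$4 + real (n - 1) * \<xi>$1 + real (m - 1) * \<xi>$2 + real (l - 1) * \<xi>$3)"

lemma phase_add_scaleR: "phase (\<xi> + t *\<^sub>R d) k = phase \<xi> k + t * phase d k"
  by (cases k) (auto simp: phase_def algebra_simps)

lemma sig_mean_eq_cis: "sig_mean \<xi> k = complex_of_real (\<xi>$5) * cis (phase \<xi> k)"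
proof -
  obtain n m l where k: "k = (n, m, l)"
    by (cases k)
  have "cis (phase \<xi> k) =
      cis (\<xi>$4) * cis (real (n - 1) * \<xi>$1) * cis (real (m - 1) * \<xi>$2) * cis (real (l - 1) * \<xi>$3)"
    by (simp add: k phase_def cis_mult add_ac)
  then show ?thesis
    by (simp add: sig_mean_def k cis_conv_exp mult_ac)
qed

definition mean_deriv :: "real^6 \<Rightarrow> real^6 \<Rightarrow> nat \<times> nat \<times> nat \<Rightarrow> complex" where
  "mean_deriv \<xi> d k = (complex_of_real (d$5) + \<i> * complex_of_real (\<xi>$5 * phase d k)) * cis (phase \<xi> k)"

lemma has_vector_derivative_sig_mean:
  "((\<lambda>t. sig_mean (\<xi> + t *\<^sub>R d) k) has_vector_derivative mean_deriv \<xi> d k) (at 0)"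
proof -
  have "((\<lambda>t. phase \<xi> k + t * phase d k) has_field_derivative phase d k) (at 0)"
    by (auto intro!: derivative_eq_intros)
  then have "((\<lambda>t. cis (phase \<xi> k + t * phase d k)) has_derivative
      (\<lambda>h. (phase d k * h) *\<^sub>R (\<i> * cis (phase \<xi> k)))) (at 0)"
    unfolding has_field_derivative_def by (auto dest: has_derivative_cis)
  then have "((\<lambda>t. cis (phase \<xi> k + t * phase d k)) has_vector_derivative
      complex_of_real (phase d k) * (\<i> * cis (phase \<xi> k))) (at 0)"
    unfolding has_vector_derivative_def by (simp add: scaleR_conv_of_real mult_ac)
  then show ?thesis
    unfolding sig_mean_eq_cis phase_add_scaleR mean_deriv_def
    by (auto intro!: derivative_eq_intros simp: algebra_simps)
qed

lemma Re_cnj_mean_deriv_mult: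
  "Re (cnj (mean_deriv \<xi> d k) * mean_deriv \<xi> e k) = d$5 * e$5 + (\<xi>$5)\<^sup>2 * phase d k * phase e k"
proof -
  let ?a = "complex_of_real (d$5) + \<i> * complex_of_real (\<xi>$5 * phase d k)"
  let ?b = "complex_of_real (e$5) + \<i> * complex_of_real (\<xi>$5 * phase e k)"
  have "cnj (mean_deriv \<xi> d k) * mean_deriv \<xi> e k = cnj ?a * ?b * (cnj (cis (phase \<xi> k)) * cis (phase \<xi> k))"
    unfolding mean_deriv_def complex_cnj_mult by (simp only: mult_ac)
  also have "cnj (cis (phase \<xi> k)) * cis (phase \<xi> k) = 1"
    by (simp add: cis_cnj cis_mult)
  finally show ?thesis
    by (simp add: power2_eq_square)
qed

lemma has_field_derivative_ln_cn_pdf: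
  fixes \<mu> :: "real \<Rightarrow> complex"
  assumes s: "s > 0" and \<mu>: "(\<mu> has_vector_derivative \<mu>') (at 0)"
  shows "((\<lambda>t. ln (cn_pdf (s + t * ds) (y - \<mu> t))) has_field_derivative
    quad_form (- ds / s) (complex_of_real (2 / s) * \<mu>') (ds / s\<^sup>2) (y - \<mu> 0)) (at 0)"
proof -
  define q where "q t = (cmod (y - \<mu> t))\<^sup>2" for t
  have "((\<lambda>t. s + t * ds) \<longlongrightarrow> s) (nhds 0)"
    by (auto intro!: tendsto_eq_intros filterlim_ident)
  then have "eventually (\<lambda>t. s + t * ds > 0) (nhds 0)"
    using s by (rule order_tendstoD)
  then have "eventually (\<lambda>t. ln (cn_pdf (s + t * ds) (y - \<mu> t)) =
      - q t / (s + t * ds) - ln (pi * (s + t * ds))) (nhds 0)"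
    by eventually_elim (simp add: cn_pdf_def ln_div q_def)
  moreover have "((\<lambda>t. - q t / (s + t * ds) - ln (pi * (s + t * ds))) has_field_derivative
      quad_form (- ds / s) (complex_of_real (2 / s) * \<mu>') (ds / s\<^sup>2) (y - \<mu> 0)) (at 0)"
  proof -
    have q: "(q has_field_derivative - 2 * Re (cnj \<mu>' * (y - \<mu> 0))) (at 0)"
      unfolding q_def cmod_power2 by (rule derivative_eq_intros refl \<mu>)+ (simp add: algebra_simps)
    have lin: "((\<lambda>t. s + t * ds) has_field_derivative ds) (at 0)"
      by (auto intro!: derivative_eq_intros)
    have lnlin: "((\<lambda>t. ln (pi * (s + t * ds))) has_field_derivative ds / s) (at 0)"
      using s by (auto intro!: derivative_eq_intros)
    from s have "s + 0 * ds \<noteq> 0"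
      by simp
    from DERIV_diff[OF DERIV_divide[OF DERIV_minus[OF q] lin this] lnlin] show ?thesis
      by (rule DERIV_cong) (use s in \<open>simp add: quad_form_def q_def field_simps power2_eq_square\<close>)
  qed
  ultimately show ?thesis
    by (simp add: DERIV_cong_ev)
qed

lemma ln_data_pdf_eq_sum:
  assumes "\<xi>$6 > 0"
  shows "ln (data_pdf N M L \<xi> y) = (\<Sum>k\<in>obs_idx N M L. ln (cn_pdf (\<xi>$6) (y k - sig_mean \<xi> k)))"
  unfolding data_pdf_def using assms
  by (intro ln_prod) (auto simp: obs_idx_def cn_pdf_def)

definition sample_score :: "real^6 \<Rightarrow> real^6 \<Rightarrow> nat \<times> nat \<times> nat \<Rightarrow> complex \<Rightarrow> real" where
  "sample_score \<xi> d k =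
    quad_form (- d$6 / \<xi>$6) (complex_of_real (2 / \<xi>$6) * mean_deriv \<xi> d k) (d$6 / (\<xi>$6)\<^sup>2)"

lemma has_field_derivative_ln_data_pdf:
  assumes s: "\<xi>$6 > 0"
  shows "((\<lambda>t. ln (data_pdf N M L (\<xi> + t *\<^sub>R d) y)) has_field_derivative
    (\<Sum>k\<in>obs_idx N M L. sample_score \<xi> d k (y k - sig_mean \<xi> k))) (at 0)"
proof -
  have "((\<lambda>t. \<xi>$6 + t * d$6) \<longlongrightarrow> \<xi>$6) (nhds 0)"
    by (auto intro!: tendsto_eq_intros filterlim_ident)
  then have "eventually (\<lambda>t. \<xi>$6 + t * d$6 > 0) (nhds 0)"
    using s by (rule order_tendstoD)
  then have "eventually (\<lambda>t. ln (data_pdf N M L (\<xi> + t *\<^sub>R d) y) =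
      (\<Sum>k\<in>obs_idx N M L. ln (cn_pdf (\<xi>$6 + t * d$6) (y k - sig_mean (\<xi> + t *\<^sub>R d) k)))) (nhds 0)"
    by eventually_elim (simp add: ln_data_pdf_eq_sum)
  moreover have "((\<lambda>t. \<Sum>k\<in>obs_idx N M L. ln (cn_pdf (\<xi>$6 + t * d$6) (y k - sig_mean (\<xi> + t *\<^sub>R d) k)))
      has_field_derivative (\<Sum>k\<in>obs_idx N M L. sample_score \<xi> d k (y k - sig_mean \<xi> k))) (at 0)"
    using has_field_derivative_ln_cn_pdf[OF s has_vector_derivative_sig_mean]
    by (intro DERIV_sum) (simp add: sample_score_def)
  ultimately show ?thesis
    by (simp add: DERIV_cong_ev)
qed

lemma score_eq_sum:
  "\<xi>$6 > 0 \<Longrightarrow> score N M L \<xi> i y = (\<Sum>k\<in>obs_idx N M L. sample_score \<xi> (axis i 1) k (y k - sig_mean \<xi> k))"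
  unfolding score_def by (rule DERIV_imp_deriv[OF has_field_derivative_ln_data_pdf])

lemma has_bochner_integral_sample_score:
  assumes s: "\<xi>$6 > 0"
  shows "has_bochner_integral lborel
    (\<lambda>z. sample_score \<xi> d k (z - sig_mean \<xi> k) * cn_pdf (\<xi>$6) (z - sig_mean \<xi> k)) 0"
proof -
  have "has_bochner_integral lborel
      (\<lambda>z. sample_score \<xi> d k (z - sig_mean \<xi> k) * cn_pdf (\<xi>$6) (z - sig_mean \<xi> k))
      (- d$6 / \<xi>$6 + d$6 / (\<xi>$6)\<^sup>2 * \<xi>$6)"
    unfolding sample_score_def by (rule has_bochner_integral_quad_form_cn_pdf[OF s])
  with s show ?thesis
    by (simp add: power2_eq_square)
qed

lemma has_bochner_integral_sample_score_mult:
  assumes s: "\<xi>$6 > 0"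
  shows "has_bochner_integral lborel
    (\<lambda>z. sample_score \<xi> d k (z - sig_mean \<xi> k) * sample_score \<xi> e k (z - sig_mean \<xi> k) *
         cn_pdf (\<xi>$6) (z - sig_mean \<xi> k))
    (2 / \<xi>$6 * Re (cnj (mean_deriv \<xi> d k) * mean_deriv \<xi> e k) + d$6 * e$6 / (\<xi>$6)\<^sup>2)"
proof -
  let ?s = "\<xi>$6" and ?a = "mean_deriv \<xi> d k" and ?b = "mean_deriv \<xi> e k"
  have "has_bochner_integral lborel
      (\<lambda>z. sample_score \<xi> d k (z - sig_mean \<xi> k) * sample_score \<xi> e k (z - sig_mean \<xi> k) *
           cn_pdf ?s (z - sig_mean \<xi> k))
      (- d$6 / ?s * (- e$6 / ?s) + (- d$6 / ?s * (e$6 / ?s\<^sup>2) + d$6 / ?s\<^sup>2 * (- e$6 / ?s)) * ?s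
       + ?s / 2 * Re (cnj (complex_of_real (2 / ?s) * ?a) * (complex_of_real (2 / ?s) * ?b))
       + 2 * (d$6 / ?s\<^sup>2) * (e$6 / ?s\<^sup>2) * ?s\<^sup>2)"
    unfolding sample_score_def by (rule has_bochner_integral_quad_form_mult_cn_pdf[OF s])
  also have "- d$6 / ?s * (- e$6 / ?s) + (- d$6 / ?s * (e$6 / ?s\<^sup>2) + d$6 / ?s\<^sup>2 * (- e$6 / ?s)) * ?s
       + ?s / 2 * Re (cnj (complex_of_real (2 / ?s) * ?a) * (complex_of_real (2 / ?s) * ?b))
       + 2 * (d$6 / ?s\<^sup>2) * (e$6 / ?s\<^sup>2) * ?s\<^sup>2
      = 2 / ?s * Re (cnj ?a * ?b) + d$6 * e$6 / ?s\<^sup>2"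
    using s by (simp add: field_simps power2_eq_square)
  finally show ?thesis .
qed

lemma fisher_info_eq_sum:
  assumes s: "\<xi>$6 > 0"
  shows "fisher_info N M L \<xi> $ i $ j = (\<Sum>k\<in>obs_idx N M L.
    2 / \<xi>$6 * Re (cnj (mean_deriv \<xi> (axis i 1) k) * mean_deriv \<xi> (axis j 1) k)
    + (axis i 1 :: real^6)$6 * (axis j 1 :: real^6)$6 / (\<xi>$6)\<^sup>2)"
proof -
  let ?a = "\<lambda>i k z. sample_score \<xi> (axis i 1) k (z - sig_mean \<xi> k)"
  let ?p = "\<lambda>k z. cn_pdf (\<xi>$6) (z - sig_mean \<xi> k)"
  have p: "has_bochner_integral lborel (?p k) 1" for k
    using has_bochner_integral_quad_form_cn_pdf[OF s, of 1 0 0 "sig_mean \<xi> k"]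
    by (simp add: quad_form_def)
  have "has_bochner_integral (data_space N M L)
      (\<lambda>y. (\<Sum>k\<in>obs_idx N M L. ?a i k (y k)) * (\<Sum>k\<in>obs_idx N M L. ?a j k (y k)) *
           (\<Prod>k\<in>obs_idx N M L. ?p k (y k)))
      (\<Sum>k\<in>obs_idx N M L. 2 / \<xi>$6 * Re (cnj (mean_deriv \<xi> (axis i 1) k) * mean_deriv \<xi> (axis j 1) k)
         + (axis i 1 :: real^6)$6 * (axis j 1 :: real^6)$6 / (\<xi>$6)\<^sup>2)"
    unfolding data_space_def
    by (rule lborel_complex_product.has_bochner_integral_product_sum_mult_sum[OF _ p
          has_bochner_integral_sample_score[OF s] has_bochner_integral_sample_score[OF s]
          has_bochner_integral_sample_score_mult[OF s]])
      (simp add: obs_idx_def)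
  then show ?thesis
    unfolding fisher_info_def using s
    by (simp add: score_eq_sum data_pdf_def has_bochner_integral_integral_eq)
qed

lemma exhaust_6:
  fixes x :: 6
  shows "x = 1 \<or> x = 2 \<or> x = 3 \<or> x = 4 \<or> x = 5 \<or> x = 6"
proof (induct x)
  case (of_int z)
  then have "z = 0 \<or> z = 1 \<or> z = 2 \<or> z = 3 \<or> z = 4 \<or> z = 5"
    by fastforce
  then show ?case
    by auto
qed

lemma UNIV_6: "UNIV = {1::6, 2, 3, 4, 5, 6}"
  using exhaust_6 by auto

lemma sum_6: "sum f (UNIV::6 set) = f 1 + f 2 + f 3 + f 4 + f 5 + f 6"
  unfolding UNIV_6 by (simp add: ac_simps)

lemma vector_6 [simp]:
  "(vector [a, b, c, d, e, f] :: ('a::zero)^6)$1 = a"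
  "(vector [a, b, c, d, e, f] :: ('a::zero)^6)$2 = b"
  "(vector [a, b, c, d, e, f] :: ('a::zero)^6)$3 = c"
  "(vector [a, b, c, d, e, f] :: ('a::zero)^6)$4 = d"
  "(vector [a, b, c, d, e, f] :: ('a::zero)^6)$5 = e"
  "(vector [a, b, c, d, e, f] :: ('a::zero)^6)$6 = f"
  unfolding vector_def by simp_all

definition grid_factor :: "6 \<Rightarrow> 6 \<Rightarrow> nat \<Rightarrow> real" where
  "grid_factor c i n = (if i = c then real n else if i = 5 \<or> i = 6 then 0 else 1)"

lemma phase_axis:
  "phase (axis i 1) (n, m, l) = grid_factor 1 i (n - 1) * grid_factor 2 i (m - 1) * grid_factor 3 i (l - 1)"
  using exhaust_6[of i] by (auto simp: phase_def axis_def grid_factor_def)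

lemma sum_obs_idx_mult:
  fixes a b c :: "nat \<Rightarrow> real"
  shows "(\<Sum>(n, m, l)\<in>obs_idx N M L. a (n - 1) * b (m - 1) * c (l - 1)) =
    sum a {..<N} * sum b {..<M} * sum c {..<L}"
proof -
  have "(\<Sum>(n, m, l)\<in>obs_idx N M L. a (n - 1) * b (m - 1) * c (l - 1)) =
      (\<Sum>n<N. a n * (\<Sum>m<M. b m * (\<Sum>l<L. c l)))"
    by (simp add: obs_idx_def sum.cartesian_product[symmetric] sum.atLeast1_atMost_eq sum_distrib_left mult.assoc)
  also have "\<dots> = sum a {..<N} * sum b {..<M} * sum c {..<L}"
    by (simp only: sum_distrib_left[symmetric] sum_distrib_right[symmetric] mult.assoc)
  finally show ?thesis .
qed

lemma sum_lessThan_real: "(\<Sum>n<N. real n) = real N * (real N - 1) / 2"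
  by (induction N) (auto simp: field_simps)

lemma sum_lessThan_real_square: "(\<Sum>n<N. real n * real n) = real N * (real N - 1) * (2 * real N - 1) / 6"
  by (induction N) (auto simp: field_simps)

lemma sum_phase_axis_mult:
  "(\<Sum>k\<in>obs_idx N M L. phase (axis i 1) k * phase (axis j 1) k) =
    (\<Sum>n<N. grid_factor 1 i n * grid_factor 1 j n) * (\<Sum>m<M. grid_factor 2 i m * grid_factor 2 j m) *
    (\<Sum>l<L. grid_factor 3 i l * grid_factor 3 j l)"
proof -
  have "(\<Sum>k\<in>obs_idx N M L. phase (axis i 1) k * phase (axis j 1) k) =
      (\<Sum>(n, m, l)\<in>obs_idx N M L. (grid_factor 1 i (n - 1) * grid_factor 1 j (n - 1)) *
         (grid_factor 2 i (m - 1) * grid_factor 2 j (m - 1)) * (grid_factor 3 i (l - 1) * grid_factor 3 j (l - 1)))"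
    by (intro sum.cong) (auto simp: phase_axis mult_ac)
  also have "\<dots> = (\<Sum>n<N. grid_factor 1 i n * grid_factor 1 j n) * (\<Sum>m<M. grid_factor 2 i m * grid_factor 2 j m) *
      (\<Sum>l<L. grid_factor 3 i l * grid_factor 3 j l)"
    by (rule sum_obs_idx_mult)
  finally show ?thesis .
qed

lemma fisher_info_entry:
  assumes "\<xi>$6 > 0"
  shows "fisher_info N M L \<xi> $ i $ j =
    2 / \<xi>$6 * ((axis i 1 :: real^6)$5 * (axis j 1 :: real^6)$5 * (real N * real M * real L)
      + (\<xi>$5)\<^sup>2 * ((\<Sum>n<N. grid_factor 1 i n * grid_factor 1 j n) *
          (\<Sum>m<M. grid_factor 2 i m * grid_factor 2 j m) * (\<Sum>l<L. grid_factor 3 i l * grid_factor 3 j l)))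
    + (axis i 1 :: real^6)$6 * (axis j 1 :: real^6)$6 * (real N * real M * real L) / (\<xi>$6)\<^sup>2"
proof -
  let ?K = "real N * real M * real L"
  let ?e = "\<lambda>i. axis i 1 :: real^6"
  have card: "(\<Sum>k\<in>obs_idx N M L. 1) = ?K"
    by (simp add: obs_idx_def card_cartesian_product)
  have "fisher_info N M L \<xi> $ i $ j = (\<Sum>k\<in>obs_idx N M L.
      2 / \<xi>$6 * (?e i $ 5 * ?e j $ 5) * 1 + 2 / \<xi>$6 * (\<xi>$5)\<^sup>2 * (phase (?e i) k * phase (?e j) k)
      + ?e i $ 6 * ?e j $ 6 / (\<xi>$6)\<^sup>2 * 1)"
    unfolding fisher_info_eq_sum[OF assms] Re_cnj_mean_deriv_mult
    by (intro sum.cong) (simp_all add: algebra_simps)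
  also have "\<dots> = 2 / \<xi>$6 * (?e i $ 5 * ?e j $ 5) * (\<Sum>k\<in>obs_idx N M L. 1)
      + 2 / \<xi>$6 * (\<xi>$5)\<^sup>2 * (\<Sum>k\<in>obs_idx N M L. phase (?e i) k * phase (?e j) k)
      + ?e i $ 6 * ?e j $ 6 / (\<xi>$6)\<^sup>2 * (\<Sum>k\<in>obs_idx N M L. 1)"
    by (simp only: sum.distrib sum_distrib_left)
  finally show ?thesis
    unfolding sum_phase_axis_mult card by (simp add: algebra_simps)
qed

definition bordered_fim ::
    "real \<Rightarrow> real \<Rightarrow> real \<Rightarrow> real \<Rightarrow> real \<Rightarrow> real \<Rightarrow> real \<Rightarrow> real \<Rightarrow> real \<Rightarrow> real^6^6" where
  "bordered_fim c mx my mz vx vy vz f5 f6 = vector [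
     vector [c * (vx + mx\<^sup>2), c * mx * my, c * mx * mz, c * mx, 0, 0],
     vector [c * mx * my, c * (vy + my\<^sup>2), c * my * mz, c * my, 0, 0],
     vector [c * mx * mz, c * my * mz, c * (vz + mz\<^sup>2), c * mz, 0, 0],
     vector [c * mx, c * my, c * mz, c, 0, 0],
     vector [0, 0, 0, 0, f5, 0],
     vector [0, 0, 0, 0, 0, f6]]"

definition bordered_fim_inv ::
    "real \<Rightarrow> real \<Rightarrow> real \<Rightarrow> real \<Rightarrow> real \<Rightarrow> real \<Rightarrow> real \<Rightarrow> real \<Rightarrow> real \<Rightarrow> real^6^6" where
  "bordered_fim_inv c mx my mz vx vy vz f5 f6 = vector [
     vector [1 / (c * vx), 0, 0, - mx / (c * vx), 0, 0],
     vector [0, 1 / (c * vy), 0, - my / (c * vy), 0, 0],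
     vector [0, 0, 1 / (c * vz), - mz / (c * vz), 0, 0],
     vector [- mx / (c * vx), - my / (c * vy), - mz / (c * vz), (1 + mx\<^sup>2 / vx + my\<^sup>2 / vy + mz\<^sup>2 / vz) / c, 0, 0],
     vector [0, 0, 0, 0, 1 / f5, 0],
     vector [0, 0, 0, 0, 0, 1 / f6]]"

lemma bordered_fim_mult_inv:
  assumes "c \<noteq> 0" "vx \<noteq> 0" "vy \<noteq> 0" "vz \<noteq> 0" "f5 \<noteq> 0" "f6 \<noteq> 0"
  shows "bordered_fim c mx my mz vx vy vz f5 f6 ** bordered_fim_inv c mx my mz vx vy vz f5 f6 = mat 1"
  unfolding vec_eq_iff matrix_matrix_mult_def
proof (intro allI)
  fix i j :: 6
  show "(\<chi> i j. \<Sum>k\<in>UNIV. bordered_fim c mx my mz vx vy vz f5 f6 $ i $ k *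
      bordered_fim_inv c mx my mz vx vy vz f5 f6 $ k $ j) $ i $ j = mat 1 $ i $ j"
    using exhaust_6[of i] exhaust_6[of j] assms
    by (auto simp: sum_6 bordered_fim_def bordered_fim_inv_def mat_def field_simps power2_eq_square)
qed

lemma matrix_inv_unique:
  fixes A B :: "real^'n^'n"
  assumes AB: "A ** B = mat 1"
  shows "matrix_inv A = B"
proof -
  have BA: "B ** A = mat 1"
    using AB matrix_left_right_inverse by blast
  then have "A ** matrix_inv A = mat 1 \<and> matrix_inv A ** A = mat 1"
    unfolding matrix_inv_def using AB by (intro someI_ex[where P = "\<lambda>A'. A ** A' = mat 1 \<and> A' ** A = mat 1"]) blast
  then have "matrix_inv A = matrix_inv A ** (A ** B)"
    using AB by simp
  also have "\<dots> = B"
    using \<open>A ** matrix_inv A = mat 1 \<and> matrix_inv A ** A = mat 1\<close> by (simp add: matrix_mul_assoc)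
  finally show ?thesis .
qed

lemma fisher_info_eq_bordered_fim:
  assumes "\<xi>$6 > 0"
  shows "fisher_info N M L \<xi> = bordered_fim (2 * (\<xi>$5)\<^sup>2 * (real N * real M * real L) / \<xi>$6)
     ((real N - 1) / 2) ((real M - 1) / 2) ((real L - 1) / 2)
     (((real N)\<^sup>2 - 1) / 12) (((real M)\<^sup>2 - 1) / 12) (((real L)\<^sup>2 - 1) / 12)
     (2 * (real N * real M * real L) / \<xi>$6) ((real N * real M * real L) / (\<xi>$6)\<^sup>2)"
  unfolding vec_eq_iff
proof (intro allI)
  fix i j :: 6
  show "fisher_info N M L \<xi> $ i $ j = bordered_fim (2 * (\<xi>$5)\<^sup>2 * (real N * real M * real L) / \<xi>$6)
     ((real N - 1) / 2) ((real M - 1) / 2) ((real L - 1) / 2)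
     (((real N)\<^sup>2 - 1) / 12) (((real M)\<^sup>2 - 1) / 12) (((real L)\<^sup>2 - 1) / 12)
     (2 * (real N * real M * real L) / \<xi>$6) ((real N * real M * real L) / (\<xi>$6)\<^sup>2) $ i $ j"
    unfolding fisher_info_entry[OF assms]
    using exhaust_6[of i] exhaust_6[of j] assms
    by (auto simp: bordered_fim_def axis_def grid_factor_def sum_lessThan_real sum_lessThan_real_square)
      (simp_all add: field_simps power2_eq_square)
qed

definition polar_jacobian :: "real \<Rightarrow> real \<Rightarrow> real \<Rightarrow> real^6^2" where
  "polar_jacobian rmax r \<theta> =
    vector [vector [rmax * sin \<theta> / (2 * pi), 0, r / pi, 0, 0, 0],
            vector [rmax * cos \<theta> / (2 * pi), 0, - (r * tan \<theta>) / pi, 0, 0, 0]]"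

lemma abs_sin_less_one:
  assumes "cos (x::real) \<noteq> 0"
  shows "\<bar>sin x\<bar> < 1"
proof -
  have "(cos x)\<^sup>2 > 0"
    using assms by simp
  then have "(sin x)\<^sup>2 < 1"
    using sin_cos_squared_add[of x] by linarith
  then show ?thesis
    by (simp add: abs_square_less_1)
qed

lemma has_field_derivative_pos_map:
  fixes r a2 a4 a5 a6 :: real and d :: "real^6"
  assumes \<theta>: "- (pi / 2) < \<theta>" "\<theta> < pi / 2" and rmax: "rmax > 0"
  defines "\<xi> \<equiv> vector [2 * pi * r / rmax, a2, pi * sin \<theta>, a4, a5, a6] :: real^6"
  shows "((\<lambda>t. pos_map rmax (\<xi> + t *\<^sub>R d) $ 1)
      has_field_derivative d$1 * rmax * sin \<theta> / (2 * pi) + r * d$3 / pi) (at 0)"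
    and "((\<lambda>t. pos_map rmax (\<xi> + t *\<^sub>R d) $ 2)
      has_field_derivative d$1 * rmax * cos \<theta> / (2 * pi) - r * tan \<theta> * d$3 / pi) (at 0)"
proof -
  have cos_pos: "cos \<theta> > 0"
    using \<theta> cos_gt_zero_pi by blast
  then have sin_bounds: "- 1 < sin \<theta>" "sin \<theta> < 1"
    using abs_sin_less_one[of \<theta>] by auto
  have arcsin_sin: "arcsin (sin \<theta>) = \<theta>"
    using \<theta> by (simp add: arcsin_sin)
  have sqrt_cos: "sqrt (1 - (sin \<theta>)\<^sup>2) = cos \<theta>"
    using cos_pos by (simp add: cos_squared_eq[symmetric])
  have pos_map_path: "pos_map rmax (\<xi> + t *\<^sub>R d) =
      vector [(2 * pi * r / rmax + t * d$1) * rmax / (2 * pi) * sin (arcsin ((pi * sin \<theta> + t * d$3) / pi)),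
              (2 * pi * r / rmax + t * d$1) * rmax / (2 * pi) * cos (arcsin ((pi * sin \<theta> + t * d$3) / pi))]"
    for t
    by (simp add: pos_map_def \<xi>_def Let_def)
  show "((\<lambda>t. pos_map rmax (\<xi> + t *\<^sub>R d) $ 1)
      has_field_derivative d$1 * rmax * sin \<theta> / (2 * pi) + r * d$3 / pi) (at 0)"
    unfolding pos_map_path using sin_bounds cos_pos rmax
    by (auto intro!: derivative_eq_intros simp: arcsin_sin sqrt_cos field_simps)
  show "((\<lambda>t. pos_map rmax (\<xi> + t *\<^sub>R d) $ 2)
      has_field_derivative d$1 * rmax * cos \<theta> / (2 * pi) - r * tan \<theta> * d$3 / pi) (at 0)"
    unfolding pos_map_path using sin_bounds cos_pos rmax
    by (auto intro!: derivative_eq_intros simp: arcsin_sin sqrt_cos tan_def field_simps)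
qed

lemma pos_jacobian_eq:
  assumes "- (pi / 2) < \<theta>" "\<theta> < pi / 2" and "rmax > 0"
  shows "pos_jacobian rmax (vector [2 * pi * r / rmax, a2, pi * sin \<theta>, a4, a5, a6]) = polar_jacobian rmax r \<theta>"
  unfolding vec_eq_iff pos_jacobian_def
proof (intro allI)
  fix i :: 2 and k :: 6
  note deriv = has_field_derivative_pos_map[OF assms, THEN DERIV_imp_deriv]
  show "(\<chi> i k. deriv (\<lambda>t. pos_map rmax (vector [2 * pi * r / rmax, a2, pi * sin \<theta>, a4, a5, a6] +
      t *\<^sub>R axis k 1) $ i) 0) $ i $ k = polar_jacobian rmax r \<theta> $ i $ k"
    using exhaust_2[of i] exhaust_6[of k] by (auto simp: deriv axis_def polar_jacobian_def)
qed

lemma polar_jacobian_bordered_fim_inv_product: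
  assumes "A \<noteq> 0" "B \<noteq> 0" "K \<noteq> 0" "g \<noteq> 0" "\<sigma>2 \<noteq> 0" "cos \<theta> \<noteq> 0"
  shows "polar_jacobian rmax r \<theta>
      ** bordered_fim_inv (2 * g\<^sup>2 * K / \<sigma>2) mx my mz (A / 12) vy (B / 12) f5 f6
      ** transpose (polar_jacobian rmax r \<theta>)
    = (let c = 6 * \<sigma>2 / (pi\<^sup>2 * K * g\<^sup>2);
           a = rmax\<^sup>2 * (sin \<theta>)\<^sup>2 / (4 * A) + r\<^sup>2 / B;
           b = (rmax\<^sup>2 / (4 * A) - r\<^sup>2 / (B * (cos \<theta>)\<^sup>2)) * sin \<theta> * cos \<theta>;
           d = rmax\<^sup>2 * (cos \<theta>)\<^sup>2 / (4 * A) + r\<^sup>2 * (tan \<theta>)\<^sup>2 / B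
       in vector [vector [c * a, c * b], vector [c * b, c * d]])"
  unfolding vec_eq_iff forall_2 Let_def using assms
  by (auto simp: polar_jacobian_def bordered_fim_inv_def matrix_matrix_mult_def transpose_def sum_6)
    (simp_all add: field_simps power2_eq_square tan_def)

theorem proposition1:
  fixes N M L :: nat and rmax vmax r v \<theta> \<phi> g \<sigma>2 :: real
  assumes "N \<ge> 2" and "M \<ge> 2" and "L \<ge> 2"
    and "rmax > 0" and "vmax > 0"
    and "- (pi / 2) < \<theta>" and "\<theta> < pi / 2"
    and "g > 0" and "\<sigma>2 > 0"
  shows "crb_pos N M L rmax
           (vector [2 * pi * r / rmax, pi * v / vmax, pi * sin \<theta>, \<phi>, g, \<sigma>2] :: real^6)
         = (let c = 6 * \<sigma>2 / (pi\<^sup>2 * real N * real M * real L * g\<^sup>2);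
                dN = 4 * ((real N)\<^sup>2 - 1);
                dL = (real L)\<^sup>2 - 1;
                a = rmax\<^sup>2 * (sin \<theta>)\<^sup>2 / dN + r\<^sup>2 / dL;
                b = (rmax\<^sup>2 / dN - r\<^sup>2 / (dL * (cos \<theta>)\<^sup>2)) * sin \<theta> * cos \<theta>;
                d = rmax\<^sup>2 * (cos \<theta>)\<^sup>2 / dN + r\<^sup>2 * (tan \<theta>)\<^sup>2 / dL
            in vector [vector [c * a, c * b], vector [c * b, c * d]])"
proof -
  let ?\<xi> = "vector [2 * pi * r / rmax, pi * v / vmax, pi * sin \<theta>, \<phi>, g, \<sigma>2] :: real^6"
  let ?K = "real N * real M * real L"
  have square_gt_1: "(real n)\<^sup>2 - 1 > 0" if "n \<ge> 2" for n
    using that mult_mono[of 2 "real n" 2 "real n"] by (simp add: power2_eq_square)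
  have "(real N)\<^sup>2 - 1 > 0" "(real M)\<^sup>2 - 1 > 0" "(real L)\<^sup>2 - 1 > 0"
    using assms by (simp_all only: square_gt_1)
  moreover have "?K > 0"
    using assms by simp
  ultimately have nonzero: "(real N)\<^sup>2 - 1 \<noteq> 0" "(real M)\<^sup>2 - 1 \<noteq> 0" "(real L)\<^sup>2 - 1 \<noteq> 0" "?K \<noteq> 0"
    by linarith+
  have "matrix_inv (fisher_info N M L ?\<xi>) = bordered_fim_inv (2 * g\<^sup>2 * ?K / \<sigma>2)
      ((real N - 1) / 2) ((real M - 1) / 2) ((real L - 1) / 2)
      (((real N)\<^sup>2 - 1) / 12) (((real M)\<^sup>2 - 1) / 12) (((real L)\<^sup>2 - 1) / 12) (2 * ?K / \<sigma>2) (?K / \<sigma>2\<^sup>2)"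
    using assms nonzero
    by (simp add: fisher_info_eq_bordered_fim matrix_inv_unique bordered_fim_mult_inv)
  moreover have "pos_jacobian rmax ?\<xi> = polar_jacobian rmax r \<theta>"
    using assms by (simp add: pos_jacobian_eq)
  moreover have "cos \<theta> \<noteq> 0"
    using assms cos_gt_zero_pi by force
  ultimately show ?thesis
    using polar_jacobian_bordered_fim_inv_product[of "(real N)\<^sup>2 - 1" "(real L)\<^sup>2 - 1" ?K g \<sigma>2 \<theta>] assms nonzero
    by (simp add: crb_pos_def Let_def mult.assoc)
qed

end
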